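(* Let $i\ge1$, $i+1\le k\le 2^i$, and let $f:[k-1]\to\mathcal{P}([i])\setminus\{\emptyset\}$ be an $(i,k)$-prototype. Suppose there exist $n\ge1$ and a partition $\pi=\{P_1,\dots,P_k\}$ of $[n+1]$ into $k$ nonempty blocks such that the set of hyperplanes $\{H_{A_1},\dots,H_{A_i}\}$, where $(A_1,\dots,A_i)=A_{f,\pi}$, is a broken circuit of $\mathcal{A}_n$ with respect to the binary order. Then for every $\tilde n\ge1$ and every partition $\tilde\pi=\{\tilde P_1,\dots,\tilde P_k\}$ of $[\tilde n+1]$ into $k$ nonempty blocks, the set $\{H_{\tilde A_1},\dots,H_{\tilde A_i}\}$ with $(\tilde A_1,\dots,\tilde A_i)=A_{f,\tilde\pi}$ is a broken circuit of $\mathcal{A}_{\tilde n}$ with respect to the binary order.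
   Context: For $n\ge1$, $\mathcal{A}_n$ is the resonance arrangement in $\mathbb{R}^n$ of hyperplanes $H_I=\{x:\sum_{i\in I}x_i=0\}$, $\emptyset\ne I\subseteq[n]$. Binary order: a subset $I$ of a set of positive integers is encoded as $\sum_{j\in I}2^j$, and subsets (and hyperplanes $H_I$) are linearly ordered by this number. A circuit of an arrangement is a minimally linearly dependent set of hyperplanes (i.e. of their normal vectors); a broken circuit is $C\setminus\{H\}$ where $C$ is a circuit and $H$ its largest element in the fixed order. An $(i,k)$-prototype is an injective map $f:[k-1]\to\mathcal{P}([i])\setminus\{\emptyset\}$; its building blocks are $I^f_j=\{\ell\in[k-1]: j\in f(\ell)\}$ for $1\le j\le i$. Given a partition $\pi$ of $[n+1]$ into $k$ blocks, the blocks are labeled $P_1,\dots,P_k$ increasingly in the binary order (so $n+1\in P_k$), and $A_{f,\pi}=(A_1,\dots,A_i)$ with $A_j=\bigcup_{\ell\in I^f_j}P_\ell\subseteq[n]$. *)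

theory Defs
  imports Complex_Main
begin

text \<open>Hyperplane H_I of the resonance arrangement A_n is identified with its index set I
  (distinct I give distinct hyperplanes). Its normal vector is the 0/1 indicator vector of I
  in R^n, represented as a function nat => real supported on {1..n}.\<close>

definition normal_vec :: "nat set \<Rightarrow> nat \<Rightarrow> real" where
  "normal_vec I = (\<lambda>j. if j \<in> I then 1 else 0)"

definition is_hyperplane :: "nat \<Rightarrow> nat set \<Rightarrow> bool" where
  "is_hyperplane n I \<longleftrightarrow> I \<noteq> {} \<and> I \<subseteq> {1..n}"

definition lin_dep :: "nat set set \<Rightarrow> bool" where
  "lin_dep S \<longleftrightarrow> (\<exists>c :: nat set \<Rightarrow> real. (\<exists>I\<in>S. c I \<noteq> 0) \<and>
       (\<forall>j. (\<Sum>I\<in>S. c I * normal_vec I j) = 0))"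

definition is_circuit :: "nat \<Rightarrow> nat set set \<Rightarrow> bool" where
  "is_circuit n C \<longleftrightarrow> (\<forall>I\<in>C. is_hyperplane n I) \<and> lin_dep C \<and>
       (\<forall>D. D \<subset> C \<longrightarrow> \<not> lin_dep D)"

definition bin_code :: "nat set \<Rightarrow> nat" where
  "bin_code I = (\<Sum>j\<in>I. 2 ^ j)"

definition is_broken_circuit :: "nat \<Rightarrow> nat set set \<Rightarrow> bool" where
  "is_broken_circuit n B \<longleftrightarrow> (\<exists>C H. is_circuit n C \<and> H \<in> C \<and>
       (\<forall>H'\<in>C. bin_code H' \<le> bin_code H) \<and> B = C - {H})"

definition is_prototype :: "nat \<Rightarrow> nat \<Rightarrow> (nat \<Rightarrow> nat set) \<Rightarrow> bool" where
  "is_prototype i k f \<longleftrightarrow> inj_on f {1..k-1} \<and>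
       (\<forall>l\<in>{1..k-1}. f l \<noteq> {} \<and> f l \<subseteq> {1..i})"

definition building_block :: "(nat \<Rightarrow> nat set) \<Rightarrow> nat \<Rightarrow> nat \<Rightarrow> nat set" where
  "building_block f k j = {l \<in> {1..k-1}. j \<in> f l}"

definition is_partition_k :: "nat set \<Rightarrow> nat \<Rightarrow> nat set set \<Rightarrow> bool" where
  "is_partition_k X k \<pi> \<longleftrightarrow> (\<forall>P\<in>\<pi>. P \<noteq> {}) \<and> \<Union>\<pi> = X \<and>
       (\<forall>P\<in>\<pi>. \<forall>Q\<in>\<pi>. P \<noteq> Q \<longrightarrow> P \<inter> Q = {}) \<and> finite \<pi> \<and> card \<pi> = k"

text \<open>The l-th block (1-indexed) in increasing binary order.\<close>
definition block :: "nat set set \<Rightarrow> nat \<Rightarrow> nat set" where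
  "block \<pi> l = (THE P. P \<in> \<pi> \<and> card {Q \<in> \<pi>. bin_code Q < bin_code P} = l - 1)"

definition A_set :: "(nat \<Rightarrow> nat set) \<Rightarrow> nat \<Rightarrow> nat set set \<Rightarrow> nat \<Rightarrow> nat set" where
  "A_set f k \<pi> j = (\<Union>l\<in>building_block f k j. block \<pi> l)"

definition A_hyps :: "(nat \<Rightarrow> nat set) \<Rightarrow> nat \<Rightarrow> nat \<Rightarrow> nat set set \<Rightarrow> nat set set" where
  "A_hyps f i k \<pi> = A_set f k \<pi> ` {1..i}"

end

theory Submission
  imports Defs
begin

text \<open>List the blocks of \<open>\<pi>\<close> as \<open>P_1, \<dots>, P_k\<close> in binary order. The map
  \<open>L \<mapsto> \<Union>l\<in>L. P_l\<close> embeds the subsets of \<open>[k - 1]\<close> into those of \<open>[n]\<close> (only the unused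
  last block contains \<open>n + 1\<close>), and \<open>A_j\<close> is the image of the building block \<open>I_j\<close>. On \<open>P_l\<close>
  the indicator of the image of \<open>L\<close> takes the value of the indicator of \<open>L\<close> at \<open>l\<close>, so the
  embedding preserves and reflects linear dependence; it preserves the binary order because
  both weightings \<open>l \<mapsto> 2^l\<close> and \<open>l \<mapsto> bin_code P_l\<close> are superincreasing; and a circuit of
  \<open>\<A>_n\<close> all but one of whose members lie in the image lies in it entirely. Hence
  \<open>{H_A_1, \<dots>, H_A_i}\<close> is a broken circuit of \<open>\<A>_n\<close> exactly when \<open>{I_1, \<dots>, I_i}\<close> is a
  broken circuit of \<open>\<A>_(k-1)\<close>, a condition on \<open>f\<close> alone.\<close>

lemma bin_code_less_power:
  assumes "finite A" and "\<forall>x\<in>A. x < m"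
  shows "bin_code A < 2 ^ m"
proof -
  have "bin_code A \<le> (\<Sum>j\<in>{0..<m}. 2 ^ j)"
    unfolding bin_code_def using assms by (intro sum_mono2) auto
  also have "\<dots> < 2 ^ m"
    by (simp add: sum_power2)
  finally show ?thesis .
qed

lemma power_le_bin_code: "finite B \<Longrightarrow> m \<in> B \<Longrightarrow> 2 ^ m \<le> bin_code B"
  unfolding bin_code_def by (rule member_le_sum) auto

lemma bin_code_less_if_Max_less:
  assumes "finite A" "finite B" "B \<noteq> {}" and "\<forall>x\<in>A. x < Max B"
  shows "bin_code A < bin_code B"
  using bin_code_less_power[OF assms(1,4)] power_le_bin_code[OF assms(2) Max_in[OF assms(2,3)]]
  by linarith

definition superincreasing :: "'a::linorder set \<Rightarrow> ('a \<Rightarrow> nat) \<Rightarrow> bool" where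
  "superincreasing U w \<longleftrightarrow> (\<forall>x\<in>U. (\<Sum>y\<in>{y\<in>U. y < x}. w y) < w x)"

lemma superincreasing_power2: "superincreasing (U :: nat set) (\<lambda>j. 2 ^ j)"
  unfolding superincreasing_def using bin_code_less_power[of "{y\<in>U. y < _}"]
  by (auto simp: bin_code_def)

lemma superincreasing_sum_less_iff:
  fixes w :: "'a::linorder \<Rightarrow> nat"
  assumes U: "finite U" "superincreasing U w" and AB: "A \<subseteq> U" "B \<subseteq> U" "A \<noteq> B"
  shows "sum w A < sum w B \<longleftrightarrow> Max (sym_diff A B) \<in> B"
proof -
  let ?D = "sym_diff A B" let ?m = "Max ?D"
  have "finite A" "finite B" using AB U finite_subset by auto
  hence fD: "finite ?D" by simp
  have "?D \<noteq> {}" using AB by auto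
  hence m: "?m \<in> ?D" using fD by (intro Max_in)
  have less: "sum w A' < sum w B'"
    if A'B': "{A', B'} = {A, B}" and mB': "?m \<in> B' - A'" for A' B'
  proof -
    have fin: "finite A'" "finite B'" using A'B' AB U finite_subset by (auto simp: doubleton_eq_iff)
    have "A' - B' \<subseteq> {y\<in>U. y < ?m}"
    proof
      fix y assume y: "y \<in> A' - B'"
      hence "y \<in> ?D" "y \<in> U" using A'B' AB by (auto simp: doubleton_eq_iff)
      hence "y \<le> ?m" using fD by simp
      moreover have "y \<noteq> ?m" using y mB' by auto
      ultimately show "y \<in> {y\<in>U. y < ?m}" using \<open>y \<in> U\<close> by simp
    qed
    hence "sum w (A' - B') \<le> (\<Sum>y\<in>{y\<in>U. y < ?m}. w y)"
      using U by (intro sum_mono2) auto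
    also have "\<dots> < w ?m" using U m AB unfolding superincreasing_def by blast
    also have "\<dots> \<le> sum w (B' - A')" using mB' fin by (intro member_le_sum) auto
    finally have "sum w (A' - B') < sum w (B' - A')" .
    moreover have "sum w A' = sum w (A' \<inter> B') + sum w (A' - B')"
      and "sum w B' = sum w (A' \<inter> B') + sum w (B' - A')"
      using fin sum.Int_Diff by (metis, metis Int_commute)
    ultimately show ?thesis by linarith
  qed
  have "{B, A} = {A, B}" by blast
  thus ?thesis
    using less[of A B] less[of B A] m by auto
qed

corollary superincreasing_sum_le_iff:
  fixes w v :: "'a::linorder \<Rightarrow> nat"
  assumes "finite U" "superincreasing U w" "superincreasing U v" and "A \<subseteq> U" "B \<subseteq> U"
  shows "sum w A \<le> sum w B \<longleftrightarrow> sum v A \<le> sum v B"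
proof (cases "A = B")
  case False
  thus ?thesis
    unfolding not_less[symmetric]
    using superincreasing_sum_less_iff[OF assms(1,2,5,4)] superincreasing_sum_less_iff[OF assms(1,3,5,4)]
    by blast
qed simp

lemma card_less_key_less_iff:
  fixes key :: "'a \<Rightarrow> 'b::linorder"
  assumes "finite X" "x \<in> X" "y \<in> X"
  shows "card {z\<in>X. key z < key x} < card {z\<in>X. key z < key y} \<longleftrightarrow> key x < key y"
proof
  assume "key x < key y"
  thus "card {z\<in>X. key z < key x} < card {z\<in>X. key z < key y}"
    using assms by (intro psubset_card_mono) auto
next
  assume less: "card {z\<in>X. key z < key x} < card {z\<in>X. key z < key y}"
  show "key x < key y"
  proof (rule ccontr)
    assume "\<not> key x < key y"
    hence "card {z\<in>X. key z < key y} \<le> card {z\<in>X. key z < key x}"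
      using assms by (intro card_mono) auto
    thus False using less by simp
  qed
qed

lemma bij_betw_card_less_key:
  fixes key :: "'a \<Rightarrow> 'b::linorder"
  assumes "finite X" "inj_on key X"
  shows "bij_betw (\<lambda>x. card {z\<in>X. key z < key x}) X {..<card X}"
proof -
  let ?r = "\<lambda>x. card {z\<in>X. key z < key x}"
  have inj: "inj_on ?r X"
  proof (rule inj_onI)
    fix x y assume xy: "x \<in> X" "y \<in> X" "?r x = ?r y"
    hence "\<not> key x < key y" "\<not> key y < key x"
      using card_less_key_less_iff[where key = key, OF assms(1) xy(1,2)]
        card_less_key_less_iff[where key = key, OF assms(1) xy(2,1)] xy(3) by auto
    hence "key x = key y" by simp
    thus "x = y" using assms(2) xy by (auto dest: inj_onD)
  qed
  have "?r x < card X" if "x \<in> X" for x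
  proof (rule psubset_card_mono)
    show "{z\<in>X. key z < key x} \<subset> X" using that by auto
  qed (rule assms(1))
  hence "?r ` X \<subseteq> {..<card X}" by auto
  moreover have "card (?r ` X) = card {..<card X}"
    using card_image[OF inj] by simp
  ultimately show ?thesis
    using inj by (simp add: bij_betw_def card_subset_eq)
qed

lemma lin_dep_image_iff:
  assumes "inj_on g S"
  shows "lin_dep (g ` S) \<longleftrightarrow>
    (\<exists>c. (\<exists>L\<in>S. c L \<noteq> 0) \<and> (\<forall>j. (\<Sum>L\<in>S. c L * normal_vec (g L) j) = 0))"
proof -
  have reindex: "(\<Sum>I\<in>g ` S. c I * normal_vec I j) = (\<Sum>L\<in>S. c (g L) * normal_vec (g L) j)"
    for c :: "nat set \<Rightarrow> real" and j
    using assms by (simp add: sum.reindex)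
  show ?thesis
  proof
    assume "lin_dep (g ` S)"
    then obtain c where "\<exists>I\<in>g ` S. c I \<noteq> 0" "\<forall>j. (\<Sum>I\<in>g ` S. c I * normal_vec I j) = 0"
      unfolding lin_dep_def by blast
    thus "\<exists>c. (\<exists>L\<in>S. c L \<noteq> 0) \<and> (\<forall>j. (\<Sum>L\<in>S. c L * normal_vec (g L) j) = 0)"
      unfolding reindex by (intro exI[of _ "c \<circ> g"]) auto
  next
    assume "\<exists>c. (\<exists>L\<in>S. c L \<noteq> 0) \<and> (\<forall>j. (\<Sum>L\<in>S. c L * normal_vec (g L) j) = 0)"
    then obtain c where c: "\<exists>L\<in>S. c L \<noteq> 0" "\<forall>j. (\<Sum>L\<in>S. c L * normal_vec (g L) j) = 0"
      by blast
    define c' where "c' = c \<circ> the_inv_into S g"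
    have c'g: "c' (g L) = c L" if "L \<in> S" for L
      unfolding c'_def using the_inv_into_f_f[OF assms that] by simp
    have "(\<Sum>L\<in>S. c' (g L) * normal_vec (g L) j) = (\<Sum>L\<in>S. c L * normal_vec (g L) j)" for j
      using c'g by (intro sum.cong) auto
    thus "lin_dep (g ` S)"
      unfolding lin_dep_def reindex using c c'g by (intro exI[of _ c']) auto
  qed
qed

lemma all_psubset_image_iff:
  assumes "inj_on g S"
  shows "(\<forall>D. D \<subset> g ` S \<longrightarrow> P D) \<longleftrightarrow> (\<forall>D. D \<subset> S \<longrightarrow> P (g ` D))"
proof -
  have "D \<subset> S \<longleftrightarrow> g ` D \<subset> g ` S" if "D \<subseteq> S" for D
    using inj_on_image_eq_iff[OF assms that] that by auto
  thus ?thesis by (metis psubset_imp_subset subset_image_iff)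
qed

lemma finite_circuit: "is_circuit n C \<Longrightarrow> finite C"
  unfolding is_circuit_def is_hyperplane_def by (rule finite_subset[of _ "Pow {1..n}"]) auto

lemma circuit_coeff_nonzero:
  assumes C: "is_circuit n C" and H: "H \<in> C"
    and c: "\<forall>j. (\<Sum>I\<in>C. c I * normal_vec I j) = 0" "\<exists>I\<in>C. c I \<noteq> 0"
  shows "c H \<noteq> 0"
proof
  assume cH: "c H = 0"
  have "(\<Sum>I\<in>C - {H}. c I * normal_vec I j) = (\<Sum>I\<in>C. c I * normal_vec I j)" for j
    using finite_circuit[OF C] cH H by (intro sum.mono_neutral_left) auto
  hence "lin_dep (C - {H})"
    unfolding lin_dep_def using c cH by (intro exI[of _ c]) auto
  moreover have "C - {H} \<subset> C" using H by blast
  ultimately show False using C unfolding is_circuit_def by blast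
qed

definition block_union :: "nat set set \<Rightarrow> nat set \<Rightarrow> nat set" where
  "block_union \<pi> L = (\<Union>l\<in>L. block \<pi> l)"

locale ordered_partition =
  fixes n k :: nat and \<pi> :: "nat set set"
  assumes partition: "is_partition_k {1..n+1} k \<pi>"
begin

lemma finite_partition: "finite \<pi>" and card_partition: "card \<pi> = k"
  and part_nonempty: "P \<in> \<pi> \<Longrightarrow> P \<noteq> {}"
  and part_subset: "P \<in> \<pi> \<Longrightarrow> P \<subseteq> {1..n+1}"
  and part_disjoint: "P \<in> \<pi> \<Longrightarrow> Q \<in> \<pi> \<Longrightarrow> P \<noteq> Q \<Longrightarrow> P \<inter> Q = {}"
  using partition unfolding is_partition_k_def by auto

lemma finite_part: "P \<in> \<pi> \<Longrightarrow> finite P"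
  using part_subset finite_subset by blast

lemma Max_part_in: "P \<in> \<pi> \<Longrightarrow> Max P \<in> P"
  using Max_in finite_part part_nonempty by blast

lemma Max_part_neq: "P \<in> \<pi> \<Longrightarrow> Q \<in> \<pi> \<Longrightarrow> P \<noteq> Q \<Longrightarrow> Max P \<noteq> Max Q"
  using Max_part_in part_disjoint by (metis disjoint_iff)

lemma bin_code_less_if_Max_less_part: "P \<in> \<pi> \<Longrightarrow> Q \<in> \<pi> \<Longrightarrow> Max P < Max Q \<Longrightarrow> bin_code P < bin_code Q"
  using finite_part part_nonempty
  by (intro bin_code_less_if_Max_less) (auto dest: Max_ge[OF finite_part])

lemma bin_code_less_iff_Max_less:
  assumes "P \<in> \<pi>" "Q \<in> \<pi>"
  shows "bin_code P < bin_code Q \<longleftrightarrow> Max P < Max Q"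
  using bin_code_less_if_Max_less_part[OF assms] bin_code_less_if_Max_less_part[OF assms(2,1)] Max_part_neq[OF assms]
  by (metis less_asym linorder_neqE_nat)

lemma inj_on_bin_code_partition: "inj_on bin_code \<pi>"
proof (rule inj_onI, rule ccontr)
  fix P Q assume PQ: "P \<in> \<pi>" "Q \<in> \<pi>" "bin_code P = bin_code Q" "P \<noteq> Q"
  hence "Max P < Max Q \<or> Max Q < Max P" using Max_part_neq by (meson linorder_neqE_nat)
  thus False using bin_code_less_if_Max_less_part PQ by (metis less_irrefl)
qed

lemma
  assumes "l \<in> {1..k}"
  shows block_in: "block \<pi> l \<in> \<pi>"
    and card_less_block: "card {Q\<in>\<pi>. bin_code Q < bin_code (block \<pi> l)} = l - 1"
proof -
  have bij: "bij_betw (\<lambda>P. card {Q\<in>\<pi>. bin_code Q < bin_code P}) \<pi> {..<k}"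
    using bij_betw_card_less_key[OF finite_partition inj_on_bin_code_partition] card_partition by simp
  have "l - 1 \<in> (\<lambda>P. card {Q\<in>\<pi>. bin_code Q < bin_code P}) ` \<pi>"
    unfolding bij_betw_imp_surj_on[OF bij] using assms by (simp, arith)
  then obtain P where P: "P \<in> \<pi>" "card {Q\<in>\<pi>. bin_code Q < bin_code P} = l - 1"
    by (auto simp del: One_nat_def)
  moreover have "P' = P" if "P' \<in> \<pi>" "card {Q\<in>\<pi>. bin_code Q < bin_code P'} = l - 1" for P'
    using bij_betw_imp_inj_on[OF bij] by (rule inj_onD) (use that P in simp_all)
  ultimately have "\<exists>!P. P \<in> \<pi> \<and> card {Q\<in>\<pi>. bin_code Q < bin_code P} = l - 1"
    by blast
  from theI'[OF this] show "block \<pi> l \<in> \<pi>" "card {Q\<in>\<pi>. bin_code Q < bin_code (block \<pi> l)} = l - 1"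
    unfolding block_def by auto
qed

lemma bin_code_block_less:
  assumes "l \<in> {1..k}" "m \<in> {1..k}" "l < m"
  shows "bin_code (block \<pi> l) < bin_code (block \<pi> m)"
proof -
  have "l - 1 < m - 1" using assms by auto
  thus ?thesis
    using card_less_key_less_iff[where key = bin_code, OF finite_partition block_in[OF assms(1)]
        block_in[OF assms(2)]] card_less_block[OF assms(1)] card_less_block[OF assms(2)]
    by simp
qed

lemma Max_block_less:
  "l \<in> {1..k} \<Longrightarrow> m \<in> {1..k} \<Longrightarrow> l < m \<Longrightarrow> Max (block \<pi> l) < Max (block \<pi> m)"
  using bin_code_block_less bin_code_less_iff_Max_less block_in by blast

lemma block_disjoint:
  assumes "l \<in> {1..k}" "m \<in> {1..k}" "l \<noteq> m"
  shows "block \<pi> l \<inter> block \<pi> m = {}"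
proof -
  have "block \<pi> l \<noteq> block \<pi> m"
    using bin_code_block_less[of l m] bin_code_block_less[of m l] assms by (cases "l < m") auto
  thus ?thesis using part_disjoint block_in assms by blast
qed

lemma block_subset:
  assumes "l \<in> {1..k-1}"
  shows "block \<pi> l \<subseteq> {1..n}"
proof
  fix x assume x: "x \<in> block \<pi> l"
  have l: "l \<in> {1..k}" "k \<in> {1..k}" "l < k" using assms by auto
  have "x \<le> Max (block \<pi> l)" using x finite_part block_in[OF l(1)] by simp
  also have "\<dots> < Max (block \<pi> k)" using Max_block_less l by blast
  also have "\<dots> \<le> n + 1" using Max_part_in part_subset block_in[OF l(2)] by fastforce
  finally show "x \<in> {1..n}" using x part_subset block_in[OF l(1)] by fastforce
qed

lemma mem_block_union_iff:
  assumes "L \<subseteq> {1..k-1}" "l \<in> {1..k-1}" "j \<in> block \<pi> l"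
  shows "j \<in> block_union \<pi> L \<longleftrightarrow> l \<in> L"
  using block_disjoint[of l] assms unfolding block_union_def by fastforce

lemma normal_vec_block_union:
  "L \<subseteq> {1..k-1} \<Longrightarrow> l \<in> {1..k-1} \<Longrightarrow> j \<in> block \<pi> l \<Longrightarrow>
    normal_vec (block_union \<pi> L) j = normal_vec L l"
  unfolding normal_vec_def by (simp add: mem_block_union_iff)

lemma normal_vec_block_union_outside:
  "L \<subseteq> {1..k-1} \<Longrightarrow> j \<notin> block_union \<pi> {1..k-1} \<Longrightarrow> normal_vec (block_union \<pi> L) j = 0"
  unfolding normal_vec_def block_union_def by auto

lemma inj_on_block_union: "inj_on (block_union \<pi>) (Pow {1..k-1})"
proof (rule inj_onI)
  fix L M assume LM: "L \<in> Pow {1..k-1}" "M \<in> Pow {1..k-1}" "block_union \<pi> L = block_union \<pi> M"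
  have "l \<in> L \<longleftrightarrow> l \<in> M" if l: "l \<in> {1..k-1}" for l
  proof -
    obtain j where j: "j \<in> block \<pi> l"
      using part_nonempty block_in l by fastforce
    show ?thesis
      using mem_block_union_iff[of L l j] mem_block_union_iff[of M l j] LM l j by simp
  qed
  thus "L = M" using LM by blast
qed

lemma block_union_subset: "L \<subseteq> {1..k-1} \<Longrightarrow> block_union \<pi> L \<subseteq> {1..n}"
  unfolding block_union_def using block_subset by blast

lemma block_union_empty_iff: "L \<subseteq> {1..k-1} \<Longrightarrow> block_union \<pi> L = {} \<longleftrightarrow> L = {}"
  unfolding block_union_def using part_nonempty block_in by force

lemma is_hyperplane_block_union:
  "L \<subseteq> {1..k-1} \<Longrightarrow> is_hyperplane n (block_union \<pi> L) \<longleftrightarrow> is_hyperplane (k-1) L"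
  unfolding is_hyperplane_def using block_union_subset block_union_empty_iff by blast

lemma bin_code_block_union:
  assumes "L \<subseteq> {1..k-1}"
  shows "bin_code (block_union \<pi> L) = (\<Sum>l\<in>L. bin_code (block \<pi> l))"
  unfolding bin_code_def block_union_def
proof (rule sum.UNION_disjoint)
  have L: "L \<subseteq> {1..k}" using assms by (rule order_trans) auto
  thus "finite L" by (rule finite_subset) simp
  show "\<forall>l\<in>L. finite (block \<pi> l)" using L finite_part block_in by blast
  show "\<forall>l\<in>L. \<forall>m\<in>L. l \<noteq> m \<longrightarrow> block \<pi> l \<inter> block \<pi> m = {}" using L block_disjoint by blast
qed

lemma superincreasing_bin_code_block: "superincreasing {1..k-1} (\<lambda>l. bin_code (block \<pi> l))"
  unfolding superincreasing_def
proof
  fix x assume x: "x \<in> {1..k-1}"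
  hence xk: "x \<in> {1..k}" by auto
  let ?L = "{y\<in>{1..k-1}. y < x}"
  have "(\<Sum>y\<in>?L. bin_code (block \<pi> y)) = bin_code (block_union \<pi> ?L)"
    by (rule bin_code_block_union[symmetric]) auto
  also have "\<dots> < bin_code (block \<pi> x)"
  proof (rule bin_code_less_if_Max_less)
    show "finite (block_union \<pi> ?L)"
      by (rule finite_subset[OF block_union_subset]) auto
    show "\<forall>z\<in>block_union \<pi> ?L. z < Max (block \<pi> x)"
    proof
      fix z assume "z \<in> block_union \<pi> ?L"
      then obtain y where y: "y \<in> ?L" "z \<in> block \<pi> y" unfolding block_union_def by blast
      hence yk: "y \<in> {1..k}" by auto
      have "z \<le> Max (block \<pi> y)" using y finite_part block_in[OF yk] by simp
      also have "\<dots> < Max (block \<pi> x)" using Max_block_less yk xk y by blast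
      finally show "z < Max (block \<pi> x)" .
    qed
    show "finite (block \<pi> x)" "block \<pi> x \<noteq> {}"
      using finite_part part_nonempty block_in[OF xk] by auto
  qed
  finally show "(\<Sum>y\<in>?L. bin_code (block \<pi> y)) < bin_code (block \<pi> x)" .
qed

lemma bin_code_block_union_le_iff:
  assumes "L \<subseteq> {1..k-1}" "M \<subseteq> {1..k-1}"
  shows "bin_code (block_union \<pi> L) \<le> bin_code (block_union \<pi> M) \<longleftrightarrow> bin_code L \<le> bin_code M"
  unfolding bin_code_block_union[OF assms(1)] bin_code_block_union[OF assms(2)]
    bin_code_def[of L] bin_code_def[of M]
  by (rule superincreasing_sum_le_iff[OF _ superincreasing_bin_code_block superincreasing_power2 assms])
    simp

lemma sum_normal_vec_block_union:
  assumes "S \<subseteq> Pow {1..k-1}" "l \<in> {1..k-1}" "j \<in> block \<pi> l"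
  shows "(\<Sum>L\<in>S. c L * normal_vec (block_union \<pi> L) j) = (\<Sum>L\<in>S. c L * normal_vec L l)"
  using assms normal_vec_block_union by (intro sum.cong) auto

lemma sum_normal_vec_block_union_outside:
  assumes "S \<subseteq> Pow {1..k-1}" "j \<notin> block_union \<pi> {1..k-1}"
  shows "(\<Sum>L\<in>S. c L * normal_vec (block_union \<pi> L) j) = 0"
  using assms normal_vec_block_union_outside by (intro sum.neutral) auto

lemma sum_normal_vec_block_union_eq_0_iff:
  assumes S: "S \<subseteq> Pow {1..k-1}"
  shows "(\<forall>j. (\<Sum>L\<in>S. c L * normal_vec (block_union \<pi> L) j) = 0) \<longleftrightarrow>
    (\<forall>l. (\<Sum>L\<in>S. c L * normal_vec L l) = 0)"
proof (intro iffI allI)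
  fix l assume zero: "\<forall>j. (\<Sum>L\<in>S. c L * normal_vec (block_union \<pi> L) j) = 0"
  show "(\<Sum>L\<in>S. c L * normal_vec L l) = 0"
  proof (cases "l \<in> {1..k-1}")
    case True
    then obtain j where "j \<in> block \<pi> l"
      using part_nonempty block_in by fastforce
    thus ?thesis using sum_normal_vec_block_union[OF S True] zero by metis
  next
    case False
    hence "l \<notin> L" if "L \<in> S" for L using S that by blast
    thus ?thesis by (intro sum.neutral) (simp add: normal_vec_def)
  qed
next
  fix j assume zero: "\<forall>l. (\<Sum>L\<in>S. c L * normal_vec L l) = 0"
  show "(\<Sum>L\<in>S. c L * normal_vec (block_union \<pi> L) j) = 0"
  proof (cases "j \<in> block_union \<pi> {1..k-1}")
    case True
    then obtain l where "l \<in> {1..k-1}" "j \<in> block \<pi> l" unfolding block_union_def by blast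
    thus ?thesis using sum_normal_vec_block_union[OF S] zero by simp
  qed (rule sum_normal_vec_block_union_outside[OF S])
qed

lemma lin_dep_block_union_iff:
  assumes "S \<subseteq> Pow {1..k-1}"
  shows "lin_dep (block_union \<pi> ` S) \<longleftrightarrow> lin_dep S"
  unfolding lin_dep_image_iff[OF inj_on_subset[OF inj_on_block_union assms]]
    sum_normal_vec_block_union_eq_0_iff[OF assms] lin_dep_def[of S] ..

lemma is_circuit_block_union_iff:
  assumes S: "S \<subseteq> Pow {1..k-1}"
  shows "is_circuit n (block_union \<pi> ` S) \<longleftrightarrow> is_circuit (k-1) S"
proof -
  have "(\<forall>D. D \<subset> block_union \<pi> ` S \<longrightarrow> \<not> lin_dep D) \<longleftrightarrow> (\<forall>D. D \<subset> S \<longrightarrow> \<not> lin_dep D)"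
    using lin_dep_block_union_iff S
    by (simp add: all_psubset_image_iff[OF inj_on_subset[OF inj_on_block_union S]])
  moreover have "(\<forall>I\<in>block_union \<pi> ` S. is_hyperplane n I) \<longleftrightarrow> (\<forall>L\<in>S. is_hyperplane (k-1) L)"
    using is_hyperplane_block_union S by auto
  ultimately show ?thesis
    unfolding is_circuit_def using lin_dep_block_union_iff[OF S] by simp
qed

lemma block_union_imageI:
  assumes H: "H \<subseteq> block_union \<pi> {1..k-1}"
    and saturated: "\<forall>l\<in>{1..k-1}. block \<pi> l \<inter> H \<noteq> {} \<longrightarrow> block \<pi> l \<subseteq> H"
  shows "H \<in> block_union \<pi> ` Pow {1..k-1}"
proof
  let ?L = "{l\<in>{1..k-1}. block \<pi> l \<inter> H \<noteq> {}}"
  show "?L \<in> Pow {1..k-1}" by blast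
  show "H = block_union \<pi> ?L"
  proof
    show "H \<subseteq> block_union \<pi> ?L"
    proof
      fix x assume "x \<in> H"
      moreover obtain l where "l \<in> {1..k-1}" "x \<in> block \<pi> l"
        using H \<open>x \<in> H\<close> unfolding block_union_def by blast
      ultimately show "x \<in> block_union \<pi> ?L" unfolding block_union_def by blast
    qed
    show "block_union \<pi> ?L \<subseteq> H"
      using saturated unfolding block_union_def by blast
  qed
qed

text \<open>The dependence of a circuit involves \<open>H\<close> with a nonzero coefficient, so the indicator
  of \<open>H\<close> is a combination of the indicators of the other members, which are constant on every
  block and vanish outside the first \<open>k - 1\<close> blocks.\<close>
lemma circuit_member_in_block_union_image:
  assumes C: "is_circuit n C" and H: "H \<in> C" and S: "S \<subseteq> Pow {1..k-1}"
    and rest: "C - {H} = block_union \<pi> ` S"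
  shows "H \<in> block_union \<pi> ` Pow {1..k-1}"
proof -
  obtain c where c: "\<exists>I\<in>C. c I \<noteq> 0" "\<forall>j. (\<Sum>I\<in>C. c I * normal_vec I j) = 0"
    using C unfolding is_circuit_def lin_dep_def by blast
  have cH: "c H \<noteq> 0" using circuit_coeff_nonzero[OF C H c(2,1)] .
  define g where "g j = (\<Sum>L\<in>S. c (block_union \<pi> L) * normal_vec (block_union \<pi> L) j)" for j
  have "(\<Sum>I\<in>C. c I * normal_vec I j) = c H * normal_vec H j + g j" for j
    unfolding sum.remove[OF finite_circuit[OF C] H] rest g_def
    using inj_on_subset[OF inj_on_block_union S] by (simp add: sum.reindex)
  hence dependence: "c H * normal_vec H j + g j = 0" for j using c(2) by simp
  have H_iff: "j \<in> H \<longleftrightarrow> g j \<noteq> 0" for j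
    using dependence[of j] cH by (cases "j \<in> H") (simp_all add: normal_vec_def)
  have g_block: "g j = (\<Sum>L\<in>S. c (block_union \<pi> L) * normal_vec L l)"
    if "l \<in> {1..k-1}" "j \<in> block \<pi> l" for l j
    unfolding g_def using sum_normal_vec_block_union[OF S that] .
  show ?thesis
  proof (rule block_union_imageI)
    show "H \<subseteq> block_union \<pi> {1..k-1}"
    proof
      fix j assume "j \<in> H"
      show "j \<in> block_union \<pi> {1..k-1}"
      proof (rule ccontr)
        assume "j \<notin> block_union \<pi> {1..k-1}"
        hence "g j = 0" unfolding g_def by (rule sum_normal_vec_block_union_outside[OF S])
        thus False using H_iff \<open>j \<in> H\<close> by simp
      qed
    qed
    show "\<forall>l\<in>{1..k-1}. block \<pi> l \<inter> H \<noteq> {} \<longrightarrow> block \<pi> l \<subseteq> H"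
    proof (intro ballI impI subsetI)
      fix l j assume l: "l \<in> {1..k-1}" and "block \<pi> l \<inter> H \<noteq> {}" and j: "j \<in> block \<pi> l"
      then obtain j' where j': "j' \<in> block \<pi> l" "j' \<in> H" by blast
      have "g j = g j'" using g_block[OF l j] g_block[OF l j'(1)] by simp
      thus "j \<in> H" using H_iff j'(2) by simp
    qed
  qed
qed

lemma is_broken_circuit_block_union_iff:
  assumes S: "S \<subseteq> Pow {1..k-1}"
  shows "is_broken_circuit n (block_union \<pi> ` S) \<longleftrightarrow> is_broken_circuit (k-1) S"
proof
  assume "is_broken_circuit n (block_union \<pi> ` S)"
  then obtain C H where C: "is_circuit n C" and H: "H \<in> C"
    and max: "\<forall>H'\<in>C. bin_code H' \<le> bin_code H" and rest: "block_union \<pi> ` S = C - {H}"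
    unfolding is_broken_circuit_def by blast
  obtain L where L: "L \<subseteq> {1..k-1}" and HL: "H = block_union \<pi> L"
    using circuit_member_in_block_union_image[OF C H S rest[symmetric]] by blast
  have C_eq: "C = block_union \<pi> ` insert L S" using rest H HL by auto
  have S': "insert L S \<subseteq> Pow {1..k-1}" using S L by blast
  have "L \<notin> S" using rest HL by auto
  moreover have "is_circuit (k-1) (insert L S)"
    using C is_circuit_block_union_iff[OF S'] C_eq by simp
  moreover have "bin_code M \<le> bin_code L" if "M \<in> insert L S" for M
  proof -
    have M: "M \<subseteq> {1..k-1}" using S' that by blast
    have "bin_code (block_union \<pi> M) \<le> bin_code (block_union \<pi> L)"
      using max that unfolding C_eq HL by blast
    thus ?thesis using bin_code_block_union_le_iff[OF M L] by simp
  qed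
  ultimately show "is_broken_circuit (k-1) S"
    unfolding is_broken_circuit_def by (intro exI[of _ "insert L S"] exI[of _ L]) auto
next
  assume "is_broken_circuit (k-1) S"
  then obtain C H where C: "is_circuit (k-1) C" and H: "H \<in> C"
    and max: "\<forall>H'\<in>C. bin_code H' \<le> bin_code H" and rest: "S = C - {H}"
    unfolding is_broken_circuit_def by blast
  have C_sub: "C \<subseteq> Pow {1..k-1}" using C unfolding is_circuit_def is_hyperplane_def by blast
  have "block_union \<pi> ` S = block_union \<pi> ` C - {block_union \<pi> H}"
    unfolding rest using inj_on_image_set_diff[OF inj_on_subset[OF inj_on_block_union C_sub]] H
    by auto
  moreover have "is_circuit n (block_union \<pi> ` C)"
    using C is_circuit_block_union_iff[OF C_sub] by simp
  moreover have "bin_code (block_union \<pi> M) \<le> bin_code (block_union \<pi> H)" if "M \<in> C" for M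
    using bin_code_block_union_le_iff[of M H] max C_sub that H by blast
  ultimately show "is_broken_circuit n (block_union \<pi> ` S)"
    unfolding is_broken_circuit_def using H by blast
qed

end

theorem proposition5p1:
  fixes i k n :: nat and f :: "nat \<Rightarrow> nat set" and \<pi> :: "nat set set"
  assumes "i \<ge> 1" and "i + 1 \<le> k" and "k \<le> 2 ^ i"
    and "is_prototype i k f"
    and "n \<ge> 1" and "is_partition_k {1..n+1} k \<pi>"
    and "is_broken_circuit n (A_hyps f i k \<pi>)"
  shows "\<forall>n' \<pi>'. n' \<ge> 1 \<longrightarrow> is_partition_k {1..n'+1} k \<pi>' \<longrightarrow>
           is_broken_circuit n' (A_hyps f i k \<pi>')"
proof (intro allI impI)
  fix n' \<pi>' assume "is_partition_k {1..n'+1} k \<pi>'"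
  interpret old: ordered_partition n k \<pi> by (rule ordered_partition.intro) fact
  interpret new: ordered_partition n' k \<pi>' by (rule ordered_partition.intro) fact
  define B where "B = building_block f k ` {1..i}"
  have A_hyps_eq: "A_hyps f i k \<rho> = block_union \<rho> ` B" for \<rho>
    unfolding A_hyps_def A_set_def block_union_def B_def by auto
  have B: "B \<subseteq> Pow {1..k-1}" unfolding B_def building_block_def by blast
  have "is_broken_circuit (k-1) B"
    using assms(7) old.is_broken_circuit_block_union_iff[OF B] A_hyps_eq by simp
  thus "is_broken_circuit n' (A_hyps f i k \<pi>')"
    using new.is_broken_circuit_block_union_iff[OF B] A_hyps_eq by simp
qed

end
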